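(* Let $f\colon\mathbb{R}^n\to\mathbb{R}$ be $f(x)=x^\top Ax+b^\top x+c$ with $A\in\mathbb{R}^{n\times n}$ symmetric, $b\in\mathbb{R}^n$, $c\in\mathbb{R}$. Let $C\colon[0,\infty)\to\mathbb{R}^{n\times n}$ solve $\dot C(t)=-2C(t)AC(t)$, with $C(0)$ invertible, and let $m(0)\in\mathbb{R}^n$. Then $m\colon[0,\infty)\to\mathbb{R}^n$ given by $$m(t)=C(t)\big(C(0)^{-1}m(0)-tb\big)$$ has initial value $m(0)$ and solves $\dot m(t)=-2C(t)Am(t)-C(t)b$.
   Context: The equations $\dot m=-2CAm-Cb$, $\dot C=-2CAC$ are the approximately Gaussian replicator flow (AGRF) equations for this quadratic $f$, i.e., the ODEs $\dot m_i=m_i\mathbb{E}[f(x)]-\mathbb{E}[x_if(x)]$, $\dot C_{ij}=(C_{ij}-m_im_j)\mathbb{E}[f(x)]-\mathbb{E}[x_ix_jf(x)]+m_i\mathbb{E}[x_jf(x)]+m_j\mathbb{E}[x_if(x)]$ with $x\sim\mathcal{N}(m(t),C(t))$, specialized to quadratic $f$. *)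

theory Defs
  imports "HOL-Analysis.Analysis"
begin

end

theory Submission
  imports Defs
begin

text \<open>Since \<open>C\<close> solves \<open>C' = -2 C A C\<close>, the product rule for \<open>m t = C t *v v t\<close> with
  \<open>v t = C(0)\<^sup>-\<^sup>1 m(0) - t b\<close> gives \<open>m' = -2 C A (C v) - C b = -2 C A m - C b\<close>;
  at \<open>t = 0\<close> the factor \<open>C 0\<close> cancels its inverse. Neither the symmetry of \<open>A\<close> nor
  the constant \<open>c\<close> plays any role.\<close>

lemma bounded_bilinear_matrix_vector_mult:
  "bounded_bilinear ((*v) :: real^'n^'m \<Rightarrow> real^'n \<Rightarrow> real^'m)"
proof -
  have "bilinear ((*v) :: real^'n^'m \<Rightarrow> real^'n \<Rightarrow> real^'m)"
    unfolding bilinear_def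
  proof (intro conjI allI)
    fix M :: "real^'n^'m"
    show "linear ((*v) M)" by (rule matrix_vector_mul_linear)
  next
    fix x :: "real^'n"
    show "linear (\<lambda>M::real^'n^'m. M *v x)"
      by (rule linearI) (simp_all add: matrix_vector_mult_add_rdistrib scaleR_matrix_vector_assoc)
  qed
  then show ?thesis by (simp add: bilinear_conv_bounded_bilinear)
qed

lemma has_vector_derivative_matrix_vector_mult:
  fixes M :: "real \<Rightarrow> real^'n^'m" and v :: "real \<Rightarrow> real^'n"
  assumes "(M has_vector_derivative M') (at t within S)"
    and "(v has_vector_derivative v') (at t within S)"
  shows "((\<lambda>t. M t *v v t) has_vector_derivative M t *v v' + M' *v v t) (at t within S)"
  using bounded_bilinear.has_vector_derivative[OF bounded_bilinear_matrix_vector_mult assms] .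

lemma matrix_mul_matrix_inv:
  fixes A :: "'a::semiring_1^'n^'m"
  assumes "invertible A"
  shows "A ** matrix_inv A = mat 1"
  using someI_ex[OF assms[unfolded invertible_def]] by (simp add: matrix_inv_def)

theorem proposition4:
  fixes A :: "real^'n^'n" and b :: "real^'n" and c :: real
    and C :: "real \<Rightarrow> real^'n^'n" and m0 :: "real^'n"
  assumes symA: "transpose A = A"
    and C_ode: "\<forall>t\<ge>0. (C has_vector_derivative (-2 *\<^sub>R (C t ** A ** C t))) (at t within {0..})"
    and C0_inv: "invertible (C 0)"
  defines "m \<equiv> (\<lambda>t. C t *v (matrix_inv (C 0) *v m0 - t *\<^sub>R b))"
  shows "m 0 = m0 \<and>
    (\<forall>t\<ge>0. (m has_vector_derivative (-2 *\<^sub>R ((C t ** A) *v m t) - C t *v b)) (at t within {0..}))"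
proof (intro conjI allI impI)
  show "m 0 = m0"
    by (simp add: m_def matrix_vector_mul_assoc matrix_mul_matrix_inv[OF C0_inv])
next
  fix t :: real
  assume "t \<ge> 0"
  define v where "v t = matrix_inv (C 0) *v m0 - t *\<^sub>R b" for t
  have "(v has_vector_derivative - b) (at t within {0..})"
    unfolding v_def by (auto intro!: derivative_eq_intros)
  then have "(m has_vector_derivative C t *v - b + (-2 *\<^sub>R (C t ** A ** C t)) *v v t)
      (at t within {0..})"
    unfolding m_def v_def[symmetric]
    using has_vector_derivative_matrix_vector_mult C_ode \<open>t \<ge> 0\<close> by blast
  moreover have "C t *v - b + (-2 *\<^sub>R (C t ** A ** C t)) *v v t
      = -2 *\<^sub>R ((C t ** A) *v m t) - C t *v b"
    by (simp add: m_def v_def[symmetric] matrix_vector_mul_assoc scaleR_matrix_vector_assoc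
        matrix_vector_mult_diff_distrib[of "C t" 0 b, simplified])
  ultimately show "(m has_vector_derivative -2 *\<^sub>R ((C t ** A) *v m t) - C t *v b)
      (at t within {0..})"
    by simp
qed

end
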